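(* Let $(G,c)$ be an edge-colored DAG, $G=(V,E)$, and suppose $ij\in E$ is covered, i.e. $\mathrm{pa}_G(j)=\mathrm{pa}_G(i)\cup\{i\}$. Let $G_{i\leftarrow j}$ be the DAG obtained by reversing $ij$ to $ji$, and color it by $c_{i\leftarrow j}(kl)=c(kl)$ for $kl\neq ji$ and $c_{i\leftarrow j}(ji)=c(ij)$ (vertices keeping distinct colors). If there is an edge $kl$ with $c(kl)=c(ij)$ and $l\notin\{i,j\}$, then $\mathcal M(G_{i\leftarrow j},c_{i\leftarrow j})\neq\mathcal M(G,c)$.
   Context: An edge-colored DAG $(G,c)$ has a map $c$ on $V\sqcup E$ in which every vertex forms its own color class. $\mathcal M(G,c)$ is the set of $(I-\Lambda)^{-T}\Omega(I-\Lambda)^{-1}$ with $\Omega=\mathrm{diag}(\omega_i)$, $\omega_i>0$, $\lambda_{ij}=0$ for $ij\notin E$, and $\lambda_{ij}=\lambda_{kl}$ whenever $c(ij)=c(kl)$. *)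

theory Defs
  imports "HOL-Analysis.Analysis"
begin

text \<open>The edge coloring is a function on pairs, relevant only on E.
  Every vertex forms its own color class, so there are no constraints on Omega.\<close>

definition parents :: "('n \<times> 'n) set \<Rightarrow> 'n \<Rightarrow> 'n set" where
  "parents E v = {u. (u, v) \<in> E}"

definition diag_mat :: "('n::finite \<Rightarrow> real) \<Rightarrow> real^'n^'n" where
  "diag_mat w = (\<chi> i j. if i = j then w i else 0)"

definition colored_model ::
  "('n::finite \<times> 'n) set \<Rightarrow> ('n \<times> 'n \<Rightarrow> 'c) \<Rightarrow> (real^'n^'n) set" where
  "colored_model E c =
     {transpose (matrix_inv (mat 1 - L)) ** diag_mat w ** matrix_inv (mat 1 - L) | L w.
        (\<forall>i. w i > 0) \<and>
        (\<forall>i j. (i, j) \<notin> E \<longrightarrow> L $ i $ j = 0) \<and>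
        (\<forall>i j k l. (i, j) \<in> E \<longrightarrow> (k, l) \<in> E \<longrightarrow> c (i, j) = c (k, l)
            \<longrightarrow> L $ i $ j = L $ k $ l)}"

definition reverse_edge :: "('n \<times> 'n) set \<Rightarrow> 'n \<Rightarrow> 'n \<Rightarrow> ('n \<times> 'n) set" where
  "reverse_edge E i j = (E - {(i, j)}) \<union> {(j, i)}"

definition reverse_color :: "('n \<times> 'n \<Rightarrow> 'c) \<Rightarrow> 'n \<Rightarrow> 'n \<Rightarrow> ('n \<times> 'n \<Rightarrow> 'c)" where
  "reverse_color c i j = (\<lambda>e. if e = (j, i) then c (i, j) else c e)"

end

theory Submission
  imports Defs
begin

text \<open>Suppose the two models coincide. In the reversed model take \<open>\<Omega> = I\<close> and \<open>\<Lambda>\<^sub>0\<close> equal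
  to 1 on the colour class of \<open>j \<rightarrow> i\<close> and 0 elsewhere, and write the resulting covariance
  \<open>A\<^sup>T A\<close>, \<open>A = (I - \<Lambda>\<^sub>0)\<^sup>-\<^sup>1\<close>, as \<open>B\<^sup>T \<Omega> B\<close> with \<open>B = (I - \<Lambda>)\<^sup>-\<^sup>1\<close> in the original
  model. The transfer matrix \<open>R = A (I - \<Lambda>)\<close> then satisfies \<open>R\<^sup>T R = \<Omega>\<close>, so both \<open>R\<close>
  and \<open>R\<^sup>-\<^sup>1 = \<Omega>\<^sup>-\<^sup>1 R\<^sup>T\<close> are supported on reachability in \<open>E \<union> {j \<rightarrow> i}\<close>. Because the
  edge is covered, the only cycle there is \<open>i \<leftrightarrow> j\<close>, so \<open>R\<close> is diagonal off the block
  \<open>{i, j}\<close>. Hence \<open>\<Lambda>\<close> agrees with \<open>\<Lambda>\<^sub>0\<close> in every column \<open>l \<notin> {i, j}\<close>, giving weight 1 to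
  the edge \<open>k \<rightarrow> l\<close> of the shared colour, while orthogonality of the columns of the
  \<open>{i, j}\<close>-block forces \<open>\<lambda>\<^sub>i\<^sub>j = 1/2\<close>.\<close>

definition supported_on :: "'a::zero^'n^'n \<Rightarrow> ('n \<times> 'n) set \<Rightarrow> bool" where
  "supported_on L E \<longleftrightarrow> (\<forall>u v. L $ u $ v \<noteq> 0 \<longrightarrow> (u, v) \<in> E)"

lemma acyclic_loop_free: "acyclic E \<Longrightarrow> (x, x) \<notin> E"
  unfolding acyclic_def by blast

lemma covered_edge_between:
  assumes "acyclic E" and "parents E j = parents E i \<union> {i}"
    and "(i, x) \<in> E\<^sup>*" and "(x, j) \<in> E\<^sup>*"
  shows "x \<in> {i, j}"
proof (rule ccontr)
  assume x: "x \<notin> {i, j}"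
  with \<open>(x, j) \<in> E\<^sup>*\<close> obtain y where "(x, y) \<in> E\<^sup>*" and "(y, j) \<in> E"
    by (metis insertCI rtranclE)
  then have "y = i \<or> (y, i) \<in> E"
    using assms(2) by (auto simp: parents_def)
  moreover have "(i, x) \<in> E\<^sup>+"
    using \<open>(i, x) \<in> E\<^sup>*\<close> x by (metis insertCI rtranclD)
  ultimately have "(i, i) \<in> E\<^sup>+"
    using \<open>(x, y) \<in> E\<^sup>*\<close> by (metis trancl_rtrancl_trancl trancl.trancl_into_trancl)
  with assms(1) show False
    unfolding acyclic_def by blast
qed

lemma mutual_reach_insert_reversed_covered:
  assumes "acyclic E" and "parents E j = parents E i \<union> {i}"
    and "(u, v) \<in> (insert (j, i) E)\<^sup>*" and "(v, u) \<in> (insert (j, i) E)\<^sup>*" and "u \<noteq> v"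
  shows "u \<in> {i, j} \<and> v \<in> {i, j}"
proof -
  have "\<not> ((u, v) \<in> E\<^sup>* \<and> (v, u) \<in> E\<^sup>*)"
    using acyclic_impl_antisym_rtrancl[OF assms(1)] \<open>u \<noteq> v\<close> by (meson antisymD)
  then have "(i, u) \<in> E\<^sup>* \<and> (u, j) \<in> E\<^sup>* \<and> (i, v) \<in> E\<^sup>* \<and> (v, j) \<in> E\<^sup>*"
    using assms(3,4) unfolding rtrancl_insert by (blast intro: rtrancl_trans)
  then show ?thesis
    using covered_edge_between[OF assms(1,2)] by blast
qed

lemma covered_edge_no_bypass:
  assumes "acyclic E" and "parents E j = parents E i \<union> {i}" and "(i, j) \<in> E"
  shows "(i, j) \<notin> (E - {(i, j)})\<^sup>*"
proof
  assume "(i, j) \<in> (E - {(i, j)})\<^sup>*"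
  moreover have "i \<noteq> j"
    using acyclic_loop_free[OF assms(1)] assms(3) by blast
  ultimately obtain x where "(i, x) \<in> E - {(i, j)}" and "(x, j) \<in> (E - {(i, j)})\<^sup>*"
    by (metis converse_rtranclE)
  then have "x \<noteq> j" and "(i, x) \<in> E\<^sup>*" and "(x, j) \<in> E\<^sup>*"
    using rtrancl_mono[of "E - {(i, j)}" E] by auto
  then have "x = i"
    using covered_edge_between[OF assms(1,2)] by blast
  with \<open>(i, x) \<in> E - {(i, j)}\<close> show False
    using acyclic_loop_free[OF assms(1)] by blast
qed

lemma acyclic_reverse_covered_edge:
  assumes "acyclic E" and "parents E j = parents E i \<union> {i}" and "(i, j) \<in> E"
  shows "acyclic (reverse_edge E i j)"
proof -
  have "reverse_edge E i j = insert (j, i) (E - {(i, j)})"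
    by (auto simp: reverse_edge_def)
  then show ?thesis
    using covered_edge_no_bypass[OF assms] acyclic_subset[OF assms(1)] by auto
qed

lemma matrix_inv_props:
  fixes A :: "'a::field^'n^'n"
  assumes "invertible A"
  shows "A ** matrix_inv A = mat 1" and "matrix_inv A ** A = mat 1"
  using someI_ex[OF assms[unfolded invertible_def]] by (auto simp: matrix_inv_def)

lemma mult_mat_one_minus_entry:
  fixes B L :: "real^'n::finite^'n"
  shows "(B ** (mat 1 - L)) $ u $ v = B $ u $ v - (\<Sum>m\<in>UNIV. B $ u $ m * L $ m $ v)"
  by (simp add: matrix_matrix_mult_def mat_def right_diff_distrib sum_subtractf
      if_distrib[where f = "\<lambda>x. _ * x"] cong: if_cong)

lemma mat_one_minus_mult_vector_entry:
  fixes L :: "real^'n::finite^'n"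
  shows "((mat 1 - L) *v x) $ u = x $ u - (\<Sum>v\<in>UNIV. L $ u $ v * x $ v)"
  by (simp add: matrix_vector_mult_def mat_def left_diff_distrib sum_subtractf
      if_distrib[where f = "\<lambda>y. y * _"] cong: if_cong)

lemma invertible_mat_one_minus_acyclic:
  fixes L :: "real^'n::finite^'n"
  assumes "acyclic E" and "supported_on L E"
  shows "invertible (mat 1 - L)"
proof -
  have "wf (E\<inverse>)"
    using assms(1) by (simp add: finite_acyclic_wf_converse)
  have "x = 0" if "(mat 1 - L) *v x = 0" for x
  proof -
    have "x $ u = 0" for u
      using \<open>wf (E\<inverse>)\<close>
    proof (induction u rule: wf_induct_rule)
      case (less u)
      then have "(\<Sum>v\<in>UNIV. L $ u $ v * x $ v) = 0"
        using assms(2) by (intro sum.neutral) (auto simp: supported_on_def)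
      with that show ?case
        by (metis mat_one_minus_mult_vector_entry diff_zero zero_index)
    qed
    then show ?thesis
      by (simp add: vec_eq_iff)
  qed
  then have "inj ((*v) (mat 1 - L))"
    by (intro injI) (metis eq_iff_diff_eq_0 matrix_vector_mult_diff_distrib)
  then show ?thesis
    using matrix_left_invertible_injective invertible_left_inverse by blast
qed

lemma matrix_inv_mat_one_minus_support:
  fixes L :: "real^'n::finite^'n"
  assumes "acyclic E" and "supported_on L E"
  shows "supported_on (matrix_inv (mat 1 - L)) (E\<^sup>*)"
  unfolding supported_on_def
proof (intro allI impI)
  fix u v
  let ?B = "matrix_inv (mat 1 - L)"
  have inv: "?B ** (mat 1 - L) = mat 1"
    using matrix_inv_props(2)[OF invertible_mat_one_minus_acyclic[OF assms]] .
  have "wf E"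
    using assms(1) by (simp add: finite_acyclic_wf)
  then show "?B $ u $ v \<noteq> 0 \<Longrightarrow> (u, v) \<in> E\<^sup>*"
  proof (induction v rule: wf_induct_rule)
    case (less v)
    show ?case
    proof (cases "u = v")
      case False
      then have "(\<Sum>m\<in>UNIV. ?B $ u $ m * L $ m $ v) \<noteq> 0"
        using less.prems inv mult_mat_one_minus_entry[of ?B L u v] by (simp add: mat_def)
      then obtain m where "?B $ u $ m \<noteq> 0" and "L $ m $ v \<noteq> 0"
        by (metis (no_types, lifting) mult_eq_0_iff sum.neutral)
      then show ?thesis
        using less.IH assms(2) by (meson rtrancl.rtrancl_into_rtrancl supported_on_def)
    qed simp
  qed
qed

lemma transfer_matrix_support:
  fixes L L0 :: "real^'n::finite^'n"
  assumes "acyclic E0" and "supported_on L0 E0" and "supported_on L E"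
  shows "supported_on (matrix_inv (mat 1 - L0) ** (mat 1 - L)) ((E0 \<union> E)\<^sup>*)"
  unfolding supported_on_def
proof (intro allI impI)
  fix u v
  let ?A = "matrix_inv (mat 1 - L0)"
  assume "(?A ** (mat 1 - L)) $ u $ v \<noteq> 0"
  then obtain m where "?A $ u $ m \<noteq> 0" and "(mat 1 - L) $ m $ v \<noteq> 0"
    unfolding matrix_matrix_mult_def
    by (metis (no_types, lifting) mult_eq_0_iff sum.neutral vec_lambda_beta)
  then have "(u, m) \<in> E0\<^sup>*" and "m = v \<or> (m, v) \<in> E"
    using matrix_inv_mat_one_minus_support[OF assms(1,2)] assms(3)
    by (auto simp: supported_on_def mat_def split: if_splits)
  then show "(u, v) \<in> (E0 \<union> E)\<^sup>*"
    using rtrancl_mono[of E0 "E0 \<union> E"] by (auto intro: rtrancl_into_rtrancl)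
qed

lemma diag_mat_mult_entry:
  "(diag_mat a ** M) $ u $ v = a u * M $ u $ v"
  by (simp add: diag_mat_def matrix_matrix_mult_def if_distrib[where f = "\<lambda>x. x * _"] cong: if_cong)

lemma left_inverse_orthogonal_columns:
  fixes R S :: "real^'n::finite^'n"
  assumes "transpose R ** R = diag_mat w" and "\<forall>u. w u \<noteq> 0" and "S ** R = mat 1"
  shows "S $ u $ v = R $ v $ u / w u"
proof -
  let ?Di = "diag_mat (\<lambda>u. 1 / w u)"
  have "?Di ** diag_mat w = mat 1"
    using assms(2) by (simp add: vec_eq_iff diag_mat_mult_entry) (simp add: diag_mat_def mat_def)
  moreover have "R ** S = mat 1"
    using assms(3) matrix_left_right_inverse by blast
  ultimately have "S = ?Di ** transpose R"
    using assms(1) by (metis matrix_mul_assoc matrix_mul_lid matrix_mul_rid)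
  then show ?thesis
    by (simp add: diag_mat_mult_entry transpose_def)
qed

lemma equal_covariance_transfer:
  fixes L L0 :: "real^'n::finite^'n"
  assumes "acyclic E" and "acyclic E0" and "supported_on L E" and "supported_on L0 E0"
    and "\<forall>u. w u > 0"
    and cov: "transpose (matrix_inv (mat 1 - L0)) ** matrix_inv (mat 1 - L0)
      = transpose (matrix_inv (mat 1 - L)) ** diag_mat w ** matrix_inv (mat 1 - L)"
  defines "R \<equiv> matrix_inv (mat 1 - L0) ** (mat 1 - L)"
  shows "mat 1 - L = (mat 1 - L0) ** R"
    and "transpose R ** R = diag_mat w"
    and "R $ x $ y \<noteq> 0 \<Longrightarrow> (x, y) \<in> (E0 \<union> E)\<^sup>* \<and> (y, x) \<in> (E0 \<union> E)\<^sup>*"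
proof -
  let ?P = "mat 1 - L" and ?Q = "mat 1 - L0"
  let ?A = "matrix_inv ?Q" and ?B = "matrix_inv ?P"
  have A: "?Q ** ?A = mat 1" "?A ** ?Q = mat 1"
    using matrix_inv_props invertible_mat_one_minus_acyclic[OF assms(2,4)] by blast+
  have B: "?P ** ?B = mat 1" "?B ** ?P = mat 1"
    using matrix_inv_props invertible_mat_one_minus_acyclic[OF assms(1,3)] by blast+
  show "?P = ?Q ** R"
    using A by (simp add: R_def matrix_mul_assoc)
  have "transpose R ** R = transpose ?P ** (transpose ?A ** ?A) ** ?P"
    by (simp add: R_def matrix_transpose_mul matrix_mul_assoc)
  also have "\<dots> = transpose (?B ** ?P) ** diag_mat w ** (?B ** ?P)"
    by (simp add: cov matrix_transpose_mul matrix_mul_assoc)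
  finally show gram: "transpose R ** R = diag_mat w"
    using B by simp
  assume "R $ x $ y \<noteq> 0"
  have "(?B ** ?Q) ** R = ?B ** (?Q ** ?A) ** ?P"
    by (simp add: R_def matrix_mul_assoc)
  then have "(?B ** ?Q) ** R = mat 1"
    using A B by simp
  then have "(?B ** ?Q) $ y $ x = R $ x $ y / w y"
    using left_inverse_orthogonal_columns[OF gram] assms(5) by (metis less_irrefl)
  then have "(?B ** ?Q) $ y $ x \<noteq> 0"
    using \<open>R $ x $ y \<noteq> 0\<close> assms(5) by (metis divide_eq_0_iff less_irrefl)
  moreover have "supported_on (?B ** ?Q) ((E \<union> E0)\<^sup>*)" and "supported_on R ((E0 \<union> E)\<^sup>*)"
    using transfer_matrix_support assms(1-4) R_def by blast+
  ultimately show "(x, y) \<in> (E0 \<union> E)\<^sup>* \<and> (y, x) \<in> (E0 \<union> E)\<^sup>*"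
    using \<open>R $ x $ y \<noteq> 0\<close> by (auto simp: supported_on_def Un_commute)
qed

definition color_class_matrix :: "('n::finite \<times> 'n) set \<Rightarrow> ('n \<times> 'n \<Rightarrow> 'c) \<Rightarrow> 'c \<Rightarrow> real^'n^'n"
  where "color_class_matrix E c \<gamma> = (\<chi> u v. if (u, v) \<in> E \<and> c (u, v) = \<gamma> then 1 else 0)"

lemma color_class_gram_in_model:
  fixes E :: "('n::finite \<times> 'n) set" and c :: "'n \<times> 'n \<Rightarrow> 'c" and \<gamma> :: 'c
  defines "A \<equiv> matrix_inv (mat 1 - color_class_matrix E c \<gamma>)"
  shows "transpose A ** A \<in> colored_model E c"
proof -
  have "diag_mat (\<lambda>_. 1) = (mat 1 :: real^'n^'n)"
    by (simp add: diag_mat_def mat_def vec_eq_iff)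
  then have "transpose A ** A = transpose A ** diag_mat (\<lambda>_. 1) ** A"
    by simp
  then show ?thesis
    unfolding colored_model_def A_def by (force simp: color_class_matrix_def)
qed

lemma column_eq_of_unit_column:
  fixes L L0 R :: "real^'n::finite^'n"
  assumes "mat 1 - L = (mat 1 - L0) ** R" and "L $ l $ l = 0" and "L0 $ l $ l = 0"
    and "\<forall>x. x \<noteq> l \<longrightarrow> R $ x $ l = 0"
  shows "L $ m $ l = L0 $ m $ l"
proof -
  have col: "(mat 1 - L) $ m' $ l = (mat 1 - L0) $ m' $ l * R $ l $ l" for m'
  proof -
    have "(mat 1 - L) $ m' $ l = (\<Sum>x\<in>{l}. (mat 1 - L0) $ m' $ x * R $ x $ l)"
      unfolding assms(1) matrix_matrix_mult_def using assms(4)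
      by (simp add: sum.mono_neutral_right[of UNIV "{l}"])
    then show ?thesis
      by simp
  qed
  from col[of l] have "R $ l $ l = 1"
    using assms(2,3) by (simp add: mat_def)
  with col[of m] show ?thesis
    by (simp add: mat_def)
qed

lemma reversed_pair_weight:
  fixes L L0 R :: "real^'n::finite^'n"
  assumes trans: "mat 1 - L = (mat 1 - L0) ** R" and gram: "transpose R ** R = diag_mat w"
    and "i \<noteq> j" and outside: "\<forall>x. x \<notin> {i, j} \<longrightarrow> R $ x $ i = 0 \<and> R $ x $ j = 0"
    and "\<forall>v. L $ v $ v = 0" and "\<forall>v. L0 $ v $ v = 0"
    and "L $ j $ i = 0" and "L0 $ i $ j = 0" and "L0 $ j $ i = 1"
  shows "L $ i $ j = 1 / 2"
proof -
  have pair_sum: "(\<Sum>x\<in>UNIV. f x) = f i + f j" if "\<forall>x. x \<notin> {i, j} \<longrightarrow> f x = 0"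
    for f :: "'n \<Rightarrow> real"
    using that \<open>i \<noteq> j\<close> by (simp add: sum.mono_neutral_right[of UNIV "{i, j}"])
  have col: "(mat 1 - L) $ m $ v
      = (mat 1 - L0) $ m $ i * R $ i $ v + (mat 1 - L0) $ m $ j * R $ j $ v"
    if "v \<in> {i, j}" for m v
    unfolding trans matrix_matrix_mult_def using outside that by (auto intro!: pair_sum)
  have "R $ i $ i = 1" and "R $ j $ i = 1"
    and "R $ i $ j = - L $ i $ j" and "R $ j $ j = 1 - L $ i $ j"
    using col[of i i] col[of j i] col[of i j] col[of j j] assms(3,5-9) by (auto simp: mat_def)
  moreover have "(transpose R ** R) $ i $ j = R $ i $ i * R $ i $ j + R $ j $ i * R $ j $ j"
    unfolding matrix_matrix_mult_def using outside by (auto simp: transpose_def intro!: pair_sum)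
  moreover have "(transpose R ** R) $ i $ j = 0"
    using gram \<open>i \<noteq> j\<close> by (simp add: diag_mat_def)
  ultimately show ?thesis
    by simp
qed

lemma covered_reversal_weights:
  fixes E :: "('n::finite \<times> 'n) set" and c :: "'n \<times> 'n \<Rightarrow> 'c" and i j :: 'n
    and L :: "real^'n^'n"
  defines "L0 \<equiv> color_class_matrix (reverse_edge E i j) (reverse_color c i j) (c (i, j))"
  assumes dag: "acyclic E" and edge: "(i, j) \<in> E"
    and covered: "parents E j = parents E i \<union> {i}"
    and supp: "supported_on L E" and w: "\<forall>u. w u > 0"
    and cov: "transpose (matrix_inv (mat 1 - L0)) ** matrix_inv (mat 1 - L0)
      = transpose (matrix_inv (mat 1 - L)) ** diag_mat w ** matrix_inv (mat 1 - L)"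
  shows "L $ i $ j = 1 / 2" and "l \<notin> {i, j} \<Longrightarrow> L $ m $ l = L0 $ m $ l"
proof -
  let ?E' = "reverse_edge E i j"
  have ij: "i \<noteq> j"
    using acyclic_loop_free[OF dag] edge by blast
  have ac': "acyclic ?E'"
    using acyclic_reverse_covered_edge[OF dag covered edge] .
  have supp0: "supported_on L0 ?E'"
    by (simp add: L0_def supported_on_def color_class_matrix_def)
  define R where "R = matrix_inv (mat 1 - L0) ** (mat 1 - L)"
  note transfer = equal_covariance_transfer[OF dag ac' supp supp0 w cov, folded R_def]
  have "?E' \<union> E = insert (j, i) E"
    using edge by (auto simp: reverse_edge_def)
  then have outside: "x = y \<or> x \<in> {i, j} \<and> y \<in> {i, j}" if "R $ x $ y \<noteq> 0" for x y
    using transfer(3)[OF that] mutual_reach_insert_reversed_covered[OF dag covered] by metis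
  have loops: "\<forall>v. L $ v $ v = 0" "\<forall>v. L0 $ v $ v = 0"
    using supp supp0 acyclic_loop_free[OF dag] acyclic_loop_free[OF ac']
    unfolding supported_on_def by blast+
  show "l \<notin> {i, j} \<Longrightarrow> L $ m $ l = L0 $ m $ l"
    using column_eq_of_unit_column[OF transfer(1)] loops outside by blast
  show "L $ i $ j = 1 / 2"
  proof (rule reversed_pair_weight[OF transfer(1,2) ij])
    show "L $ j $ i = 0"
      using supp edge dag unfolding supported_on_def acyclic_def by (meson trancl.intros)
  qed (use loops outside ij in \<open>auto simp: L0_def color_class_matrix_def reverse_edge_def
      reverse_color_def\<close>)
qed

theorem lemma5p7:
  fixes E :: "('n::finite \<times> 'n) set" and c :: "'n \<times> 'n \<Rightarrow> 'c" and i j :: 'n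
  assumes dag: "acyclic E"
    and edge: "(i, j) \<in> E"
    and covered: "parents E j = parents E i \<union> {i}"
    and shared: "\<exists>k l. (k, l) \<in> E \<and> c (k, l) = c (i, j) \<and> l \<notin> {i, j}"
  shows "colored_model (reverse_edge E i j) (reverse_color c i j) \<noteq> colored_model E c"
proof
  let ?E' = "reverse_edge E i j" and ?c' = "reverse_color c i j"
  let ?L0 = "color_class_matrix ?E' ?c' (c (i, j))"
  assume "colored_model ?E' ?c' = colored_model E c"
  then have "transpose (matrix_inv (mat 1 - ?L0)) ** matrix_inv (mat 1 - ?L0) \<in> colored_model E c"
    using color_class_gram_in_model by metis
  then obtain L w where w: "\<forall>u. w u > 0" and supp: "supported_on L E"
    and colors: "\<forall>a b a' b'. (a, b) \<in> E \<longrightarrow> (a', b') \<in> E \<longrightarrow> c (a, b) = c (a', b')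
      \<longrightarrow> L $ a $ b = L $ a' $ b'"
    and cov: "transpose (matrix_inv (mat 1 - ?L0)) ** matrix_inv (mat 1 - ?L0)
      = transpose (matrix_inv (mat 1 - L)) ** diag_mat w ** matrix_inv (mat 1 - L)"
    unfolding colored_model_def supported_on_def by blast
  obtain k l where kl: "(k, l) \<in> E" "c (k, l) = c (i, j)" "l \<notin> {i, j}"
    using shared by blast
  note weights = covered_reversal_weights[OF dag edge covered supp w cov]
  have "L $ k $ l = ?L0 $ k $ l"
    using weights(2) kl(3) .
  also have "\<dots> = 1"
    using kl by (auto simp: color_class_matrix_def reverse_edge_def reverse_color_def)
  finally have "L $ k $ l = 1" .
  moreover have "L $ i $ j = L $ k $ l"
    using colors edge kl by metis
  ultimately show False
    using weights(1) by simp
qed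

end
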